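(* Let $X\in\mathbb{R}^{n\times p}$, $y\in\mathbb{R}^n$, $\lambda\ge0$, $\mu>0$, $A=X^\top X$, $K\ge1$, and a partition $I_1,\dots,I_K$ of $\{1,\dots,p\}$ into nonempty sets with $p_i=|I_i|$. Let $\{g^t=(\beta^t,z^t,u^t)\}_{t\ge0}$ be generated by Algorithm 3 (defined below) from an arbitrary initial point, and assume the set $\Omega^*$ of saddle points of the Lagrangian $L$ (defined below) is nonempty. Then: (1) (Global convergence) $g^t$ converges to some $g^*=(\beta^*,z^*,u^* )\in\Omega^*$; (2) (Rate) for every integer $T>0$, $$\|g^T-g^{T+1}\|_{H_K}^2\le\frac{1}{T+1}\|g^0-g^*\|_{H_K}^2,$$ where $H_K$ is the positive definite matrix defined below.
   Context: Notation: $\mathcal{S}_\tau(v)=\mathrm{sign}(v)\odot\max\{|v|-\tau,0\}$ (componentwise); $\lambda_{\max}$ is the largest eigenvalue; $\|v\|_H=\sqrt{v^\top Hv}$. $X_i$ is the submatrix of $X$ with columns in $I_i$, $A_i=X^\top X_i\in\mathbb{R}^{p\times p_i}$, $\beta_{i\cdot}\in\mathbb{R}^{p_i}$ is the subvector of $\beta$ indexed by $I_i$; vectors $g$ are ordered as $g=(\beta_{1\cdot},\dots,\beta_{K\cdot},z,u)$. Let $\mathcal{Z}_0=\{z:\|z\|_\infty\le n\lambda\}$, $\delta_{\mathcal{Z}_0}$ its indicator ($0$ on $\mathcal{Z}_0$, $+\infty$ off it). Lagrangian: $L(\beta,z;u)=\sum_{i=1}^K\|\beta_{i\cdot}\|_1+\delta_{\mathcal{Z}_0}(z)-u^\top(\sum_{i=1}^KA_i\beta_{i\cdot}-z-X^\top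 y)$; $\Omega^*$ is the set of $(\beta^*,z^*,u^* )$ with $L(\beta^*,z^*,u)\le L(\beta^*,z^*,u^* )\le L(\beta,z,u^* )$ for all $(\beta,z,u)$. Algorithm 3: set $\eta_i=\lambda_{\max}(\mu A_i^\top A_i)+1$ for $i=1,\dots,K$. For $t\ge0$: $\beta^{t+1}_{i\cdot}=\mathcal{S}_{1/\eta_i}(\beta^t_{i\cdot}+A_i^\top u^t/\eta_i)$ for each $i$; $z^{t+1}=\min\{\max\{z^t-u^t/\mu,-n\lambda\},n\lambda\}$; $u^{t+1}=u^t-\frac{\mu}{K+1}[2(\sum_iA_i\beta^{t+1}_{i\cdot}-z^{t+1}-X^\top y)-(\sum_iA_i\beta^{t}_{i\cdot}-z^t-X^\top y)]$. Matrix: with $G=(A_1,\dots,A_K,-I_p)\in\mathbb{R}^{p\times 2p}$ and $\tilde\Lambda_K=\mathrm{diag}(\eta_1I_{p_1},\dots,\eta_KI_{p_K},\mu I_p)$ (equivalently $\mathrm{diag}(\mu A_1^\top A_1+S_1',\dots,\mu A_K^\top A_K+S_K',\mu I_p)$ with $S_i'=\eta_iI_{p_i}-\mu A_i^\top A_i$), $$H_K=\begin{pmatrix}\tilde\Lambda_K & G^\top\\ G & \frac{K+1}{\mu}I_p\end{pmatrix}.$$ *)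

theory Defs
  imports Complex_Main "HOL-Library.Extended_Real"
begin

text \<open>Data: X is an n x p matrix with rows indexed by the finite type 'n and columns
by the finite type 'p (so n = card (UNIV :: 'n set), p = CARD('p)); vectors are functions on
the index type.\<close>

definition gram :: "('n::finite \<Rightarrow> 'p::finite \<Rightarrow> real) \<Rightarrow> 'p \<Rightarrow> 'p \<Rightarrow> real" where
  "gram X j k = (\<Sum>r\<in>UNIV. X r j * X r k)"

definition Xty :: "('n::finite \<Rightarrow> 'p::finite \<Rightarrow> real) \<Rightarrow> ('n \<Rightarrow> real) \<Rightarrow> 'p \<Rightarrow> real" where
  "Xty X y k = (\<Sum>r\<in>UNIV. X r k * y r)"

definition soft_thr :: "real \<Rightarrow> real \<Rightarrow> real" where
  "soft_thr \<tau> v = sgn v * max (\<bar>v\<bar> - \<tau>) 0"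

definition is_partition :: "nat \<Rightarrow> (nat \<Rightarrow> 'p set) \<Rightarrow> bool" where
  "is_partition K I \<longleftrightarrow> K \<ge> 1 \<and> (\<forall>i\<in>{1..K}. I i \<noteq> {}) \<and>
     (\<forall>i\<in>{1..K}. \<forall>j\<in>{1..K}. i \<noteq> j \<longrightarrow> I i \<inter> I j = {}) \<and>
     (\<Union>i\<in>{1..K}. I i) = UNIV"

text \<open>Real eigenvalues of the principal submatrix of M with rows/columns in I.\<close>
definition eigvals_on :: "'p set \<Rightarrow> ('p \<Rightarrow> 'p \<Rightarrow> real) \<Rightarrow> real set" where
  "eigvals_on I M = {c. \<exists>v. v \<noteq> (\<lambda>_. 0) \<and> (\<forall>k. k \<notin> I \<longrightarrow> v k = 0) \<and>
       (\<forall>k\<in>I. (\<Sum>l\<in>I. M k l * v l) = c * v k)}"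

definition lambda_max_on :: "'p set \<Rightarrow> ('p \<Rightarrow> 'p \<Rightarrow> real) \<Rightarrow> real" where
  "lambda_max_on I M = Max (eigvals_on I M)"

text \<open>eta_i = lambda_max(mu A_i^T A_i) + 1, where (A_i^T A_i)_{kl} = sum_j A_{jk} A_{jl}, k,l in I_i.\<close>
definition eta :: "('n::finite \<Rightarrow> 'p::finite \<Rightarrow> real) \<Rightarrow> real \<Rightarrow> (nat \<Rightarrow> 'p set) \<Rightarrow> nat \<Rightarrow> real" where
  "eta X \<mu> I i = lambda_max_on (I i) (\<lambda>k l. \<mu> * (\<Sum>j\<in>UNIV. gram X j k * gram X j l)) + 1"

definition resid :: "('n::finite \<Rightarrow> 'p::finite \<Rightarrow> real) \<Rightarrow> ('n \<Rightarrow> real) \<Rightarrow> nat \<Rightarrow> (nat \<Rightarrow> 'p set)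
    \<Rightarrow> ('p \<Rightarrow> real) \<Rightarrow> ('p \<Rightarrow> real) \<Rightarrow> 'p \<Rightarrow> real" where
  "resid X y K I \<beta> z j = (\<Sum>i\<in>{1..K}. \<Sum>k\<in>I i. gram X j k * \<beta> k) - z j - Xty X y j"

text \<open>Lagrangian, with the indicator of Z_0 taking values in the extended reals.\<close>
definition lagr :: "('n::finite \<Rightarrow> 'p::finite \<Rightarrow> real) \<Rightarrow> ('n \<Rightarrow> real) \<Rightarrow> real \<Rightarrow> nat \<Rightarrow> (nat \<Rightarrow> 'p set)
    \<Rightarrow> ('p \<Rightarrow> real) \<Rightarrow> ('p \<Rightarrow> real) \<Rightarrow> ('p \<Rightarrow> real) \<Rightarrow> ereal" where
  "lagr X y lam K I \<beta> z u =
     ereal ((\<Sum>i\<in>{1..K}. \<Sum>k\<in>I i. \<bar>\<beta> k\<bar>) - (\<Sum>j\<in>UNIV. u j * resid X y K I \<beta> z j))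
     + (if (\<forall>j. \<bar>z j\<bar> \<le> real (card (UNIV :: 'n set)) * lam) then 0 else \<infinity>)"

definition saddle :: "('n::finite \<Rightarrow> 'p::finite \<Rightarrow> real) \<Rightarrow> ('n \<Rightarrow> real) \<Rightarrow> real \<Rightarrow> nat \<Rightarrow> (nat \<Rightarrow> 'p set)
    \<Rightarrow> ('p \<Rightarrow> real) \<Rightarrow> ('p \<Rightarrow> real) \<Rightarrow> ('p \<Rightarrow> real) \<Rightarrow> bool" where
  "saddle X y lam K I \<beta>s zs us \<longleftrightarrow>
     (\<forall>\<beta> z u. lagr X y lam K I \<beta>s zs u \<le> lagr X y lam K I \<beta>s zs us \<and>
              lagr X y lam K I \<beta>s zs us \<le> lagr X y lam K I \<beta> z us)"

definition alg3 :: "('n::finite \<Rightarrow> 'p::finite \<Rightarrow> real) \<Rightarrow> ('n \<Rightarrow> real) \<Rightarrow> real \<Rightarrow> real \<Rightarrow> nat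
    \<Rightarrow> (nat \<Rightarrow> 'p set) \<Rightarrow> (nat \<Rightarrow> 'p \<Rightarrow> real) \<Rightarrow> (nat \<Rightarrow> 'p \<Rightarrow> real) \<Rightarrow> (nat \<Rightarrow> 'p \<Rightarrow> real) \<Rightarrow> bool" where
  "alg3 X y lam \<mu> K I \<beta> z u \<longleftrightarrow> (\<forall>t.
     (\<forall>i\<in>{1..K}. \<forall>k\<in>I i. \<beta> (Suc t) k =
         soft_thr (1 / eta X \<mu> I i) (\<beta> t k + (\<Sum>j\<in>UNIV. gram X j k * u t j) / eta X \<mu> I i)) \<and>
     (\<forall>j. z (Suc t) j = min (max (z t j - u t j / \<mu>) (- (real (card (UNIV :: 'n set)) * lam))) (real (card (UNIV :: 'n set)) * lam)) \<and>
     (\<forall>j. u (Suc t) j = u t j - \<mu> / (real K + 1) *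
         (2 * resid X y K I (\<beta> (Suc t)) (z (Suc t)) j - resid X y K I (\<beta> t) (z t) j)))"

text \<open>The matrix H_K, indexed by (('p + 'p) + 'p): Inl (Inl k) = beta-coordinate k,
 Inl (Inr k) = z-coordinate k, Inr j = u-coordinate j.\<close>
definition Lam :: "('n::finite \<Rightarrow> 'p::finite \<Rightarrow> real) \<Rightarrow> real \<Rightarrow> nat \<Rightarrow> (nat \<Rightarrow> 'p set)
    \<Rightarrow> ('p + 'p) \<Rightarrow> ('p + 'p) \<Rightarrow> real" where
  "Lam X \<mu> K I a b = (case (a, b) of
      (Inl k, Inl l) \<Rightarrow> (if k = l then (\<Sum>i\<in>{1..K}. if k \<in> I i then eta X \<mu> I i else 0) else 0)
    | (Inr k, Inr l) \<Rightarrow> (if k = l then \<mu> else 0)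
    | _ \<Rightarrow> 0)"

definition Gmat :: "('n::finite \<Rightarrow> 'p::finite \<Rightarrow> real) \<Rightarrow> 'p \<Rightarrow> ('p + 'p) \<Rightarrow> real" where
  "Gmat X j a = (case a of Inl k \<Rightarrow> gram X j k | Inr k \<Rightarrow> (if j = k then -1 else 0))"

definition Hmat :: "('n::finite \<Rightarrow> 'p::finite \<Rightarrow> real) \<Rightarrow> real \<Rightarrow> nat \<Rightarrow> (nat \<Rightarrow> 'p set)
    \<Rightarrow> (('p + 'p) + 'p) \<Rightarrow> (('p + 'p) + 'p) \<Rightarrow> real" where
  "Hmat X \<mu> K I a b = (case (a, b) of
      (Inl a', Inl b') \<Rightarrow> Lam X \<mu> K I a' b'
    | (Inl a', Inr j) \<Rightarrow> Gmat X j a'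
    | (Inr j, Inl b') \<Rightarrow> Gmat X j b'
    | (Inr j, Inr j') \<Rightarrow> (if j = j' then (real K + 1) / \<mu> else 0))"

definition gvec :: "('p \<Rightarrow> real) \<Rightarrow> ('p \<Rightarrow> real) \<Rightarrow> ('p \<Rightarrow> real) \<Rightarrow> (('p + 'p) + 'p) \<Rightarrow> real" where
  "gvec \<beta> z u a = (case a of Inl (Inl k) \<Rightarrow> \<beta> k | Inl (Inr k) \<Rightarrow> z k | Inr k \<Rightarrow> u k)"

definition Hnorm_sq :: "('n::finite \<Rightarrow> 'p::finite \<Rightarrow> real) \<Rightarrow> real \<Rightarrow> nat \<Rightarrow> (nat \<Rightarrow> 'p set)
    \<Rightarrow> ((('p + 'p) + 'p) \<Rightarrow> real) \<Rightarrow> real" where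
  "Hnorm_sq X \<mu> K I g = (\<Sum>a\<in>UNIV. \<Sum>b\<in>UNIV. g a * Hmat X \<mu> K I a b * g b)"

end

theory Submission
  imports Defs "HOL-Analysis.Analysis"
begin

text \<open>Algorithm 3 is the fixed-point iteration of a map \<open>T\<close> that is firmly nonexpansive
  in the \<open>H\<^sub>K\<close>-norm: \<open>\<parallel>T g - T g'\<parallel>\<^sup>2 + \<parallel>(g - T g) - (g' - T g')\<parallel>\<^sup>2 \<le> \<parallel>g - g'\<parallel>\<^sup>2\<close>.
  This follows coordinatewise from the firm nonexpansiveness of soft thresholding and of clipping
  to \<open>Z\<^sub>0\<close>; the off-diagonal blocks and the weight \<open>(K + 1)/\<mu>\<close> of \<open>H\<^sub>K\<close> are exactly what absorbs
  the dual update, and \<open>\<eta>\<^sub>i - 1 \<ge> \<lambda>\<^sub>m\<^sub>a\<^sub>x(\<mu> A\<^sub>i\<^sup>T A\<^sub>i)\<close> makes \<open>H\<^sub>K\<close> positive definite.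
  The fixed points of \<open>T\<close> are the saddle points of \<open>L\<close>, since both are characterised by the KKT
  conditions. Against any fixed point the iterates are Fejer monotone, so they are bounded, every
  cluster point is fixed, and Fejer monotonicity with respect to that cluster point forces
  convergence. Summing \<open>\<parallel>g\<^sup>t - g\<^sup>t\<^sup>+\<^sup>1\<parallel>\<^sup>2 \<le> \<parallel>g\<^sup>t - g\<^sup>*\<parallel>\<^sup>2 - \<parallel>g\<^sup>t\<^sup>+\<^sup>1 - g\<^sup>*\<parallel>\<^sup>2\<close> and using that
  the successive differences decrease gives the \<open>1/(T + 1)\<close> rate.\<close>

section \<open>Proximal maps of the absolute value and of an interval\<close>

definition clip :: "real \<Rightarrow> real \<Rightarrow> real \<Rightarrow> real" where
  "clip lo hi v = min (max v lo) hi"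

lemma soft_thr_eq_sub_clip: "\<tau> \<ge> 0 \<Longrightarrow> soft_thr \<tau> v = v - clip (-\<tau>) \<tau> v"
  by (auto simp: soft_thr_def clip_def sgn_if max_def min_def)

lemma clip_mono: "lo \<le> hi \<Longrightarrow> v \<le> v' \<Longrightarrow> clip lo hi v \<le> clip lo hi v'"
  by (auto simp: clip_def)

lemma clip_residual_mono: "lo \<le> hi \<Longrightarrow> v \<le> v' \<Longrightarrow> v - clip lo hi v \<le> v' - clip lo hi v'"
  by (auto simp: clip_def min_def max_def)

lemma clip_firmly_nonexpansive:
  assumes "lo \<le> hi"
  shows "((v - clip lo hi v) - (v' - clip lo hi v')) * (clip lo hi v - clip lo hi v') \<ge> 0"
proof -
  have "v \<le> v' \<or> v' \<le> v" by linarith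
  then show ?thesis
    using clip_mono[OF assms] clip_residual_mono[OF assms]
    by (metis diff_ge_0_iff_ge diff_le_0_iff_le mult_nonneg_nonneg mult_nonpos_nonpos)
qed

lemma soft_thr_firmly_nonexpansive:
  assumes "\<tau> \<ge> 0"
  shows "((v - soft_thr \<tau> v) - (v' - soft_thr \<tau> v')) * (soft_thr \<tau> v - soft_thr \<tau> v') \<ge> 0"
  using clip_firmly_nonexpansive[of "-\<tau>" \<tau> v v'] assms
  unfolding soft_thr_eq_sub_clip[OF assms] by (simp add: mult.commute)

text \<open>Fixed points are described by the scalar KKT conditions \<open>s \<in> \<partial>\<bar>a\<bar>\<close> and
  \<open>-u \<in> N\<^bsub>[lo, hi]\<^esub>(z)\<close>, written out as inequalities.\<close>

lemma soft_thr_fixed_imp_subgradient: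
  assumes "\<tau> > 0" "soft_thr \<tau> (a + \<tau> * s) = a"
  shows "\<bar>a\<bar> + s * (b - a) \<le> \<bar>b\<bar>"
proof -
  consider "a > 0" | "a < 0" | "a = 0" by linarith
  then show ?thesis
  proof cases
    case 1
    then have "\<tau> * s = \<tau> * 1" using assms
      by (auto simp: soft_thr_def sgn_if max_def split: if_splits)
    then have "s = 1" using assms(1) by simp
    then show ?thesis using 1 by simp
  next
    case 2
    then have "\<tau> * (s + 1) = 0" using assms
      by (auto simp: soft_thr_def sgn_if max_def distrib_left split: if_splits)
    then have "s = -1" using assms(1) by simp
    then show ?thesis using 2 by simp
  next
    case 3
    then have "\<bar>\<tau> * s\<bar> \<le> \<tau>" using assms
      by (auto simp: soft_thr_def sgn_if max_def split: if_splits)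
    then have "\<bar>s\<bar> \<le> 1" using assms by (simp add: abs_mult)
    then have "s * b \<le> \<bar>b\<bar>"
      by (metis abs_ge_self abs_mult mult_left_le_one_le abs_ge_zero order_trans)
    then show ?thesis using 3 by simp
  qed
qed

lemma subgradient_imp_soft_thr_fixed:
  assumes "\<tau> > 0" "\<And>b. \<bar>a\<bar> + s * (b - a) \<le> \<bar>b\<bar>"
  shows "soft_thr \<tau> (a + \<tau> * s) = a"
proof -
  have "\<bar>a\<bar> + s * (2 * a - a) \<le> \<bar>2 * a\<bar>" "\<bar>a\<bar> + s * (0 - a) \<le> \<bar>0\<bar>"
    by (fact assms(2))+
  then have at_2a: "s * a \<le> \<bar>a\<bar>" and at_0: "\<bar>a\<bar> \<le> s * a"
    by (simp_all add: abs_mult)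
  consider "a > 0" | "a < 0" | "a = 0" by linarith
  then show ?thesis
  proof cases
    case 1
    then have "s * a = 1 * a" using at_2a at_0 by simp
    then have "s = 1" using 1 by simp
    then show ?thesis using 1 assms(1) by (auto simp: soft_thr_def sgn_if max_def)
  next
    case 2
    then have "(s + 1) * a = 0" using at_2a at_0 by (simp add: distrib_right)
    then have "s = -1" using 2 by simp
    then show ?thesis using 2 assms(1) by (auto simp: soft_thr_def sgn_if max_def)
  next
    case 3
    have "\<bar>s\<bar> \<le> 1" using assms(2)[of 1] assms(2)[of "-1"] 3 by simp
    then have "\<bar>\<tau> * s\<bar> \<le> \<tau>" using assms(1) by (simp add: abs_mult mult_left_le)
    then show ?thesis using 3 by (auto simp: soft_thr_def sgn_if max_def)
  qed
qed

lemma soft_thr_fixed_iff: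
  assumes "\<tau> > 0"
  shows "soft_thr \<tau> (a + \<tau> * s) = a \<longleftrightarrow> (\<forall>b. \<bar>a\<bar> + s * (b - a) \<le> \<bar>b\<bar>)"
  using soft_thr_fixed_imp_subgradient[OF assms] subgradient_imp_soft_thr_fixed[OF assms] by blast

lemma clip_fixed_imp_normal_cone:
  assumes "\<mu> > 0" "lo \<le> hi" "clip lo hi (z - u / \<mu>) = z" "lo \<le> c" "c \<le> hi"
  shows "u * (c - z) \<ge> 0"
proof -
  consider "u = 0" | "u > 0" | "u < 0" by linarith
  then show ?thesis
  proof cases
    case 2
    then have "u / \<mu> > 0" using assms by simp
    then have "z = lo" using assms(2,3) by (auto simp: clip_def min_def max_def split: if_splits)
    then show ?thesis using 2 assms by simp
  next
    case 3
    then have "u / \<mu> < 0" using assms by (simp add: divide_neg_pos)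
    then have "z = hi" using assms(2,3) by (auto simp: clip_def min_def max_def split: if_splits)
    then show ?thesis using 3 assms by (simp add: mult_nonpos_nonpos)
  qed simp
qed

lemma normal_cone_imp_clip_fixed:
  assumes "\<mu> > 0" "lo \<le> z" "z \<le> hi" "\<And>c. lo \<le> c \<Longrightarrow> c \<le> hi \<Longrightarrow> u * (c - z) \<ge> 0"
  shows "clip lo hi (z - u / \<mu>) = z"
proof -
  consider "u = 0" | "u > 0" | "u < 0" by linarith
  then show ?thesis
  proof cases
    case 1
    then show ?thesis using assms by (simp add: clip_def)
  next
    case 2
    have "u * (lo - z) \<ge> 0" using assms by auto
    then have "z = lo" using 2 assms(2) by (smt (verit) mult_pos_neg)
    moreover have "u / \<mu> > 0" using 2 assms by simp
    ultimately show ?thesis using assms by (simp add: clip_def)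
  next
    case 3
    have "u * (hi - z) \<ge> 0" using assms by auto
    then have "z = hi" using 3 assms(3) by (smt (verit) mult_neg_pos)
    moreover have "u / \<mu> < 0" using 3 assms by (simp add: divide_neg_pos)
    ultimately show ?thesis using assms by (simp add: clip_def)
  qed
qed

lemma clip_fixed_iff:
  assumes "\<mu> > 0" "lo \<le> hi"
  shows "clip lo hi (z - u / \<mu>) = z \<longleftrightarrow> lo \<le> z \<and> z \<le> hi \<and> (\<forall>c. lo \<le> c \<and> c \<le> hi \<longrightarrow> u * (c - z) \<ge> 0)"
proof
  assume fixed: "clip lo hi (z - u / \<mu>) = z"
  then have "lo \<le> z \<and> z \<le> hi" using assms(2) by (auto simp: clip_def)
  with clip_fixed_imp_normal_cone[OF assms fixed] show "lo \<le> z \<and> z \<le> hi \<and> (\<forall>c. lo \<le> c \<and> c \<le> hi \<longrightarrow> u * (c - z) \<ge> 0)"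
    by blast
qed (use normal_cone_imp_clip_fixed[OF assms(1)] in blast)

section \<open>The largest eigenvalue bounds the Rayleigh quotient\<close>

definition bilin_on :: "'p set \<Rightarrow> ('p \<Rightarrow> 'p \<Rightarrow> real) \<Rightarrow> ('p \<Rightarrow> real) \<Rightarrow> ('p \<Rightarrow> real) \<Rightarrow> real" where
  "bilin_on I M u v = (\<Sum>k\<in>I. \<Sum>l\<in>I. u k * M k l * v l)"

lemma bilin_on_sym: "(\<And>k l. M k l = M l k) \<Longrightarrow> bilin_on I M u v = bilin_on I M v u"
  unfolding bilin_on_def by (subst sum.swap) (simp add: mult.commute mult.left_commute)

lemma bilin_on_eq_sum_mult: "bilin_on I M u v = (\<Sum>k\<in>I. u k * (\<Sum>l\<in>I. M k l * v l))"
  unfolding bilin_on_def by (simp add: sum_distrib_left mult.assoc)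

lemma bilin_on_add_scaled:
  assumes "\<And>k l. M k l = M l k"
  shows "bilin_on I M (\<lambda>k. u k + t * w k) (\<lambda>k. u k + t * w k)
    = bilin_on I M u u + 2 * t * bilin_on I M w u + t\<^sup>2 * bilin_on I M w w"
proof -
  have "bilin_on I M (\<lambda>k. u k + t * w k) (\<lambda>k. u k + t * w k)
      = bilin_on I M u u + t * bilin_on I M w u + t * bilin_on I M u w + t\<^sup>2 * bilin_on I M w w"
    unfolding bilin_on_def by (simp add: algebra_simps sum.distrib sum_distrib_left power2_eq_square)
  then show ?thesis using bilin_on_sym[OF assms, where I=I and u=u and v=w] by simp
qed

lemma bilin_on_unit_left:
  assumes "k \<in> I" "finite I"
  shows "bilin_on I M (\<lambda>l. if l = k then 1 else 0) u = (\<Sum>l\<in>I. M k l * u l)"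
proof -
  have "bilin_on I M (\<lambda>l. if l = k then 1 else 0) u = (\<Sum>k'\<in>I. if k' = k then \<Sum>l\<in>I. M k' l * u l else 0)"
    unfolding bilin_on_eq_sum_mult by (rule sum.cong) auto
  then show ?thesis using assms by (simp add: sum.delta')
qed

lemma eigvecs_on_orthogonal:
  fixes M :: "'p \<Rightarrow> 'p \<Rightarrow> real"
  assumes sym: "\<And>k l. M k l = M l k"
    and v: "\<forall>k\<in>I. (\<Sum>l\<in>I. M k l * v l) = c * v k"
    and w: "\<forall>k\<in>I. (\<Sum>l\<in>I. M k l * w l) = d * w k"
    and "c \<noteq> d"
  shows "(\<Sum>k\<in>I. v k * w k) = 0"
proof -
  have "bilin_on I M v w = d * (\<Sum>k\<in>I. v k * w k)"
    unfolding bilin_on_eq_sum_mult using w by (simp add: sum_distrib_left mult_ac)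
  moreover have "bilin_on I M w v = c * (\<Sum>k\<in>I. v k * w k)"
    unfolding bilin_on_eq_sum_mult using v by (simp add: sum_distrib_left mult_ac)
  ultimately have "(c - d) * (\<Sum>k\<in>I. v k * w k) = 0"
    using bilin_on_sym[OF sym, where I=I and u=v and v=w] by (simp add: algebra_simps)
  then show ?thesis using \<open>c \<noteq> d\<close> by simp
qed

text \<open>Eigenvectors for distinct eigenvalues are orthogonal, hence linearly independent
  in the finite-dimensional space \<open>real^'p\<close>.\<close>

lemma eigvals_on_finite:
  fixes M :: "'p::finite \<Rightarrow> 'p \<Rightarrow> real"
  assumes sym: "\<And>k l. M k l = M l k"
  shows "finite (eigvals_on I M)"
proof -
  let ?E = "eigvals_on I M"
  define P where "P c v \<longleftrightarrow> v \<noteq> (\<lambda>_. 0) \<and> (\<forall>k. k \<notin> I \<longrightarrow> v k = 0) \<and>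
       (\<forall>k\<in>I. (\<Sum>l\<in>I. M k l * v l) = c * v k)" for c v
  define ev where "ev c = (SOME v. P c v)" for c
  have evP: "P c (ev c)" if "c \<in> ?E" for c
  proof -
    have "\<exists>v. P c v" using that unfolding eigvals_on_def P_def by blast
    then show ?thesis unfolding ev_def by (rule someI_ex)
  qed
  define vv :: "real \<Rightarrow> real^'p" where "vv c = (\<chi> k. ev c k)" for c
  have inner_vv: "vv c \<bullet> vv d = (\<Sum>k\<in>I. ev c k * ev d k)" if "c \<in> ?E" for c d
  proof -
    have "vv c \<bullet> vv d = (\<Sum>k\<in>UNIV. ev c k * ev d k)" unfolding vv_def inner_vec_def by simp
    also have "\<dots> = (\<Sum>k\<in>I. ev c k * ev d k)"
      by (rule sum.mono_neutral_right) (use evP[OF that] in \<open>auto simp: P_def\<close>)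
    finally show ?thesis .
  qed
  have orth: "vv c \<bullet> vv d = 0" if "c \<in> ?E" "d \<in> ?E" "c \<noteq> d" for c d
    unfolding inner_vv[OF that(1)]
    by (rule eigvecs_on_orthogonal[OF sym, where v="ev c" and c=c and w="ev d" and d=d])
      (use evP[OF that(1)] evP[OF that(2)] that(3) in \<open>auto simp: P_def\<close>)
  have nonzero: "vv c \<noteq> 0" if "c \<in> ?E" for c
    using evP[OF that] unfolding P_def vv_def by (metis vec_lambda_beta zero_index ext)
  have "inj_on vv ?E"
  proof (rule inj_onI, rule ccontr)
    fix c d assume "c \<in> ?E" "d \<in> ?E" "vv c = vv d" "c \<noteq> d"
    then show False using orth[of c d] nonzero[of c] by simp
  qed
  moreover have "pairwise orthogonal (vv ` ?E)"
    unfolding pairwise_def orthogonal_def using orth by blast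
  then have "independent (vv ` ?E)"
    using nonzero by (intro pairwise_orthogonal_independent) auto
  ultimately show ?thesis
    using independent_bound finite_imageD by blast
qed

lemma quadratic_nonpos_imp_linear_coeff_zero:
  fixes a b :: real
  assumes "\<And>t. 2 * t * a + t\<^sup>2 * b \<le> 0"
  shows "a = 0"
proof -
  define c where "c = \<bar>b\<bar> + 1"
  have "c > 0" "2 * c + b > 0" unfolding c_def by auto
  have "(2 * (a / c) * a + (a / c)\<^sup>2 * b) * c\<^sup>2 \<le> 0"
    using assms[of "a / c"] by (simp add: mult_nonpos_nonneg)
  also have "(2 * (a / c) * a + (a / c)\<^sup>2 * b) * c\<^sup>2 = a\<^sup>2 * (2 * c + b)"
    using \<open>c > 0\<close> by (simp add: field_simps power2_eq_square)
  finally have "a\<^sup>2 \<le> 0" using \<open>2 * c + b > 0\<close> by (simp add: mult_le_0_iff)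
  then show ?thesis by simp
qed

text \<open>First-order condition at a maximiser of the Rayleigh quotient: perturbing \<open>v0\<close> in
  coordinate \<open>k\<close> by \<open>t\<close> yields a quadratic inequality in \<open>t\<close> whose linear
  coefficient is the \<open>k\<close>-th component of \<open>M v0 - c v0\<close>.\<close>

lemma rayleigh_maximizer_eigenvalue:
  fixes M :: "'p::finite \<Rightarrow> 'p \<Rightarrow> real"
  assumes sym: "\<And>k l. M k l = M l k"
    and v0_supp: "\<forall>k. k \<notin> I \<longrightarrow> v0 k = 0" and v0_unit: "(\<Sum>k\<in>I. (v0 k)\<^sup>2) = 1"
    and max: "\<And>w. \<forall>k. k \<notin> I \<longrightarrow> w k = 0 \<Longrightarrow> bilin_on I M w w \<le> bilin_on I M v0 v0 * (\<Sum>k\<in>I. (w k)\<^sup>2)"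
  shows "bilin_on I M v0 v0 \<in> eigvals_on I M"
proof -
  define c where "c = bilin_on I M v0 v0"
  have "(\<Sum>l\<in>I. M k l * v0 l) = c * v0 k" if kI: "k \<in> I" for k
  proof -
    define e where "e l = (if l = k then 1 else (0::real))" for l
    have "2 * t * ((\<Sum>l\<in>I. M k l * v0 l) - c * v0 k) + t\<^sup>2 * (M k k - c) \<le> 0" for t
    proof -
      have "\<forall>l. l \<notin> I \<longrightarrow> v0 l + t * e l = 0" using v0_supp kI unfolding e_def by auto
      note le = max[OF this]
      have "bilin_on I M (\<lambda>l. v0 l + t * e l) (\<lambda>l. v0 l + t * e l)
          = c + 2 * t * (\<Sum>l\<in>I. M k l * v0 l) + t\<^sup>2 * M k k"
        using bilin_on_add_scaled[OF sym, where I=I and u=v0 and t=t and w=e] bilin_on_unit_left[OF kI, where M=M] kI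
        unfolding c_def e_def by (simp add: if_distrib sum.delta' cong: if_cong)
      moreover have "(\<Sum>l\<in>I. (v0 l + t * e l)\<^sup>2) = 1 + 2 * t * v0 k + t\<^sup>2"
      proof -
        have "(v0 l + t * e l)\<^sup>2 = (v0 l)\<^sup>2 + (if l = k then 2 * t * v0 k + t\<^sup>2 else 0)" for l
          by (simp add: e_def power2_eq_square algebra_simps)
        then show ?thesis using kI v0_unit by (simp add: sum.distrib sum.delta')
      qed
      ultimately show ?thesis using le unfolding c_def by (simp add: algebra_simps)
    qed
    then show ?thesis using quadratic_nonpos_imp_linear_coeff_zero by fastforce
  qed
  moreover have "v0 \<noteq> (\<lambda>_. 0)" using v0_unit by auto
  ultimately show ?thesis unfolding eigvals_on_def c_def using v0_supp by blast
qed

lemma rayleigh_maximizer_exists: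
  fixes M :: "'p::finite \<Rightarrow> 'p \<Rightarrow> real"
  assumes "I \<noteq> {}"
  obtains v0 where "\<forall>k. k \<notin> I \<longrightarrow> v0 k = 0" "(\<Sum>k\<in>I. (v0 k)\<^sup>2) = 1"
    "\<And>w. \<forall>k. k \<notin> I \<longrightarrow> w k = 0 \<Longrightarrow> bilin_on I M w w \<le> bilin_on I M v0 v0 * (\<Sum>k\<in>I. (w k)\<^sup>2)"
proof -
  define q :: "real^'p \<Rightarrow> real" where "q x = bilin_on I M (vec_nth x) (vec_nth x)" for x
  define V where "V = {x :: real^'p. \<forall>k. k \<notin> I \<longrightarrow> x $ k = 0}"
  have "closed V" unfolding V_def
    by (intro closed_Collect_all closed_Collect_imp closed_Collect_eq) (auto intro!: continuous_intros)
  then have "compact (sphere 0 1 \<inter> V)" by (simp add: compact_Int_closed)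
  moreover obtain k0 where "k0 \<in> I" using assms by blast
  then have "axis k0 1 \<in> V" by (simp add: V_def axis_def)
  then have "axis k0 1 \<in> sphere 0 1 \<inter> V" by simp
  moreover have "continuous_on (sphere 0 1 \<inter> V) q"
    unfolding q_def bilin_on_def by (auto intro!: continuous_intros)
  ultimately obtain x0 where x0: "x0 \<in> sphere 0 1 \<inter> V" and x0_max: "\<forall>y\<in>sphere 0 1 \<inter> V. q y \<le> q x0"
    using continuous_attains_sup by (metis empty_iff)
  have norm_V: "(norm x)\<^sup>2 = (\<Sum>k\<in>I. (x $ k)\<^sup>2)" if "x \<in> V" for x :: "real^'p"
  proof -
    have "(norm x)\<^sup>2 = (\<Sum>k\<in>UNIV. (x $ k)\<^sup>2)"
      unfolding power2_norm_eq_inner inner_vec_def by (simp add: power2_eq_square)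
    also have "\<dots> = (\<Sum>k\<in>I. (x $ k)\<^sup>2)"
      by (rule sum.mono_neutral_right) (use that in \<open>auto simp: V_def\<close>)
    finally show ?thesis .
  qed
  show ?thesis
  proof
    show "\<forall>k. k \<notin> I \<longrightarrow> x0 $ k = 0" using x0 by (simp add: V_def)
    show "(\<Sum>k\<in>I. (x0 $ k)\<^sup>2) = 1" using x0 norm_V[of x0] by simp
    fix w :: "'p \<Rightarrow> real" assume "\<forall>k. k \<notin> I \<longrightarrow> w k = 0"
    define x where "x = (\<chi> k. w k)"
    have x: "x \<in> V" and w_eq: "vec_nth x = w"
      using \<open>\<forall>k. k \<notin> I \<longrightarrow> w k = 0\<close> by (auto simp: V_def x_def)
    have "q x \<le> q x0 * (norm x)\<^sup>2"
    proof (cases "x = 0")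
      case False
      have "x /\<^sub>R norm x \<in> sphere 0 1 \<inter> V" using False x by (auto simp: V_def)
      then have "q (x /\<^sub>R norm x) \<le> q x0" using x0_max by blast
      moreover have "q (x /\<^sub>R norm x) = q x / (norm x)\<^sup>2" unfolding q_def bilin_on_def
        by (simp add: sum_divide_distrib power2_eq_square field_simps)
      ultimately show ?thesis using False by (simp add: divide_le_eq)
    qed (simp add: q_def bilin_on_def)
    then show "bilin_on I M w w \<le> bilin_on I M (vec_nth x0) (vec_nth x0) * (\<Sum>k\<in>I. (w k)\<^sup>2)"
      using norm_V[OF x] unfolding q_def w_eq by simp
  qed
qed

lemma bilin_on_le_lambda_max_on:
  fixes M :: "'p::finite \<Rightarrow> 'p \<Rightarrow> real"
  assumes sym: "\<And>k l. M k l = M l k" and "I \<noteq> {}"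
  shows "bilin_on I M v v \<le> lambda_max_on I M * (\<Sum>k\<in>I. (v k)\<^sup>2)"
proof -
  obtain v0 where v0: "\<forall>k. k \<notin> I \<longrightarrow> v0 k = 0" "(\<Sum>k\<in>I. (v0 k)\<^sup>2) = 1"
    and max: "\<And>w. \<forall>k. k \<notin> I \<longrightarrow> w k = 0 \<Longrightarrow> bilin_on I M w w \<le> bilin_on I M v0 v0 * (\<Sum>k\<in>I. (w k)\<^sup>2)"
    using rayleigh_maximizer_exists[OF \<open>I \<noteq> {}\<close>] by blast
  have "bilin_on I M v0 v0 \<le> lambda_max_on I M"
    unfolding lambda_max_on_def
    using rayleigh_maximizer_eigenvalue[where M=M, OF sym v0 max] eigvals_on_finite[where M=M, OF sym] by simp
  moreover have "bilin_on I M v v = bilin_on I M (\<lambda>k. if k \<in> I then v k else 0) (\<lambda>k. if k \<in> I then v k else 0)"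
    unfolding bilin_on_def by simp
  ultimately show ?thesis
    using max[of "\<lambda>k. if k \<in> I then v k else 0"]
    by (simp add: mult_right_mono sum_nonneg order_trans)
qed

section \<open>Iterating a firmly nonexpansive map\<close>

lemma fejer_rate_bound:
  fixes d e :: "nat \<Rightarrow> real"
  assumes "\<And>t. e t \<ge> 0" and fejer: "\<And>t. e (Suc t) + d t \<le> e t" and "decseq d"
  shows "d T \<le> e 0 / (real T + 1)"
proof -
  have telescope: "e (Suc T) + (\<Sum>t\<le>T. d t) \<le> e 0" for T
  proof (induction T)
    case (Suc T)
    then show ?case using fejer[of "Suc T"] by simp
  qed (use fejer[of 0] in simp)
  have "(real T + 1) * d T = (\<Sum>t\<le>T. d T)" by simp
  also have "\<dots> \<le> (\<Sum>t\<le>T. d t)" by (rule sum_mono) (use \<open>decseq d\<close> in \<open>simp add: decseq_def\<close>)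
  also have "\<dots> \<le> e 0" using telescope[of T] assms(1)[of "Suc T"] by linarith
  finally show ?thesis by (simp add: field_simps mult.commute)
qed

locale firmly_nonexpansive =
  fixes q :: "'a::euclidean_space \<Rightarrow> real" and T :: "'a \<Rightarrow> 'a"
  assumes q_continuous: "continuous_on UNIV q"
    and q_scaleR: "\<And>a v. q (a *\<^sub>R v) = a\<^sup>2 * q v"
    and q_pos: "\<And>v. v \<noteq> 0 \<Longrightarrow> q v > 0"
    and firm: "\<And>v w. q (T v - T w) + q ((v - T v) - (w - T w)) \<le> q (v - w)"
begin

lemma q_zero [simp]: "q 0 = 0"
  using q_scaleR[of 0 0] by simp

lemma q_nonneg: "q v \<ge> 0"
  using q_pos[of v] by (cases "v = 0") auto

lemma q_coercive: "\<exists>c>0. \<forall>v. c * (norm v)\<^sup>2 \<le> q v"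
proof -
  obtain e :: 'a where "e \<in> Basis" using nonempty_Basis by blast
  then have "e \<in> sphere 0 1" by simp
  then have "sphere (0::'a) 1 \<noteq> {}" by blast
  then obtain v0 where v0: "v0 \<in> sphere 0 1" and min: "\<And>v. v \<in> sphere 0 1 \<Longrightarrow> q v0 \<le> q v"
    using continuous_attains_inf[OF compact_sphere _ continuous_on_subset[OF q_continuous]] by blast
  have "q v0 * (norm v)\<^sup>2 \<le> q v" for v
  proof (cases "v = 0")
    case False
    then have "q v0 \<le> q (inverse (norm v) *\<^sub>R v)" by (intro min) simp
    also have "\<dots> = q v / (norm v)\<^sup>2" by (simp add: q_scaleR power_inverse divide_inverse_commute)
    finally show ?thesis using False by (simp add: le_divide_eq)
  qed simp
  moreover have "q v0 > 0" using v0 by (intro q_pos) auto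
  ultimately show ?thesis by blast
qed

lemma tendsto_zero_if_q_tendsto_zero:
  assumes "(\<lambda>n. q (f n)) \<longlonglongrightarrow> 0"
  shows "f \<longlonglongrightarrow> 0"
proof -
  obtain c where "c > 0" and coercive: "\<And>v. c * (norm v)\<^sup>2 \<le> q v"
    using q_coercive by blast
  show ?thesis
  proof (rule Lim_null_comparison)
    have "norm v \<le> sqrt (q v / c)" for v
      using coercive[of v] \<open>c > 0\<close> by (intro real_le_rsqrt) (simp add: pos_le_divide_eq mult.commute)
    then show "\<forall>\<^sub>F n in sequentially. norm (f n) \<le> sqrt (q (f n) / c)" by simp
    show "(\<lambda>n. sqrt (q (f n) / c)) \<longlonglongrightarrow> 0"
      using tendsto_real_sqrt[OF tendsto_divide_zero[OF assms]] by simp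
  qed
qed

lemma q_tendsto_zero: "f \<longlonglongrightarrow> 0 \<Longrightarrow> (\<lambda>n. q (f n)) \<longlonglongrightarrow> 0"
  using continuous_on_tendsto_compose[OF q_continuous, of f 0] by simp

lemma nonexpansive: "q (T v - T w) \<le> q (v - w)"
  using firm[of v w] q_nonneg[of "v - T v - (w - T w)"] by linarith

lemma fejer_monotone: "T l = l \<Longrightarrow> q (T v - l) + q (v - T v) \<le> q (v - l)"
  using firm[of v l] by simp

lemma tendsto_T: "f \<longlonglongrightarrow> l \<Longrightarrow> (\<lambda>n. T (f n)) \<longlonglongrightarrow> T l"
proof -
  assume "f \<longlonglongrightarrow> l"
  then have lim: "(\<lambda>n. q (f n - l)) \<longlonglongrightarrow> 0" by (intro q_tendsto_zero LIM_zero)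
  have "(\<lambda>n. q (T (f n) - T l)) \<longlonglongrightarrow> 0"
  proof (rule real_tendsto_sandwich[OF _ _ tendsto_const lim])
    show "\<forall>\<^sub>F n in sequentially. 0 \<le> q (T (f n) - T l)"
      by (intro always_eventually allI q_nonneg)
    show "\<forall>\<^sub>F n in sequentially. q (T (f n) - T l) \<le> q (f n - l)"
      by (intro always_eventually allI nonexpansive)
  qed
  then show ?thesis by (rule LIM_zero_cancel[OF tendsto_zero_if_q_tendsto_zero])
qed

context
  fixes x :: "nat \<Rightarrow> 'a"
  assumes iter: "\<And>t. x (Suc t) = T (x t)"
begin

lemma iterates_fejer: "T l = l \<Longrightarrow> q (x (Suc t) - l) + q (x t - x (Suc t)) \<le> q (x t - l)"
  using fejer_monotone[of l "x t"] by (simp add: iter)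

lemma iterates_diff_decseq: "decseq (\<lambda>t. q (x t - x (Suc t)))"
  using nonexpansive[of "x t" "x (Suc t)" for t] by (intro decseq_SucI) (simp add: iter)

lemma iterates_diff_rate:
  assumes "T l = l"
  shows "q (x t - x (Suc t)) \<le> q (x 0 - l) / (real t + 1)"
  by (rule fejer_rate_bound[of "\<lambda>t. q (x t - l)" "\<lambda>t. q (x t - x (Suc t))"])
    (fact q_nonneg iterates_fejer[OF assms] iterates_diff_decseq)+

lemma iterates_diff_tendsto_zero:
  assumes "T s = s"
  shows "(\<lambda>t. x t - x (Suc t)) \<longlonglongrightarrow> 0"
proof (rule tendsto_zero_if_q_tendsto_zero, rule real_tendsto_sandwich[OF _ _ tendsto_const])
  show "(\<lambda>t. q (x 0 - s) / (real t + 1)) \<longlonglongrightarrow> 0"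
    using tendsto_mult_right_zero[OF LIMSEQ_inverse_real_of_nat, of "q (x 0 - s)"]
    by (simp add: divide_inverse add.commute)
  show "\<forall>\<^sub>F t in sequentially. 0 \<le> q (x t - x (Suc t))"
    by (intro always_eventually allI q_nonneg)
  show "\<forall>\<^sub>F t in sequentially. q (x t - x (Suc t)) \<le> q (x 0 - s) / (real t + 1)"
    by (intro always_eventually allI iterates_diff_rate[OF assms])
qed

lemma iterates_bounded:
  assumes "T s = s"
  shows "bounded (range x)"
proof -
  obtain c where "c > 0" and coercive: "\<And>v. c * (norm v)\<^sup>2 \<le> q v"
    using q_coercive by blast
  have bound: "q (x t - s) \<le> q (x 0 - s)" for t
  proof (induction t)
    case (Suc t)
    then show ?case using iterates_fejer[OF assms, of t] q_nonneg[of "x t - x (Suc t)"] by linarith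
  qed simp
  have "c * (norm (x t - s))\<^sup>2 \<le> q (x 0 - s)" for t
    using coercive[of "x t - s"] bound[of t] by linarith
  then have "(norm (x t - s))\<^sup>2 \<le> q (x 0 - s) / c" for t
    using \<open>c > 0\<close> by (simp add: pos_le_divide_eq mult.commute)
  then have "dist s (x t) \<le> sqrt (q (x 0 - s) / c)" for t
    by (simp add: dist_norm norm_minus_commute real_le_rsqrt)
  then show ?thesis
    unfolding bounded_def by (intro exI[of _ s] exI[of _ "sqrt (q (x 0 - s) / c)"]) blast
qed

text \<open>Bolzano-Weierstrass gives a cluster point, which is fixed because successive differences
  vanish and \<open>T\<close> is continuous; Fejer monotonicity with respect to it then forces convergence.\<close>

lemma iterates_converge:
  assumes "T s = s"
  obtains l where "T l = l" "x \<longlonglongrightarrow> l"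
proof -
  obtain l r where r: "strict_mono r" and lim_r: "(\<lambda>n. x (r n)) \<longlonglongrightarrow> l"
    using bounded_imp_convergent_subsequence[OF iterates_bounded[OF assms]] by (auto simp: o_def)
  have "(\<lambda>n. x (r n) - (x (r n) - x (Suc (r n)))) \<longlonglongrightarrow> l - 0"
    using lim_r LIMSEQ_subseq_LIMSEQ[OF iterates_diff_tendsto_zero[OF assms] r]
    by (intro tendsto_diff) (simp_all add: o_def)
  then have "(\<lambda>n. x (Suc (r n))) \<longlonglongrightarrow> l" by simp
  moreover have "(\<lambda>n. x (Suc (r n))) \<longlonglongrightarrow> T l"
    unfolding iter by (rule tendsto_T[OF lim_r])
  ultimately have fixed: "T l = l" by (rule LIMSEQ_unique[symmetric])
  have "decseq (\<lambda>t. q (x t - l))"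
    using iterates_fejer[OF fixed] q_nonneg by (intro decseq_SucI) (smt (verit))
  moreover have "\<forall>t. 0 \<le> q (x t - l)" by (simp add: q_nonneg)
  ultimately obtain L where L: "(\<lambda>t. q (x t - l)) \<longlonglongrightarrow> L" by (metis decseq_convergent)
  have "(\<lambda>n. q (x (r n) - l)) \<longlonglongrightarrow> 0"
    by (intro q_tendsto_zero LIM_zero lim_r)
  with LIMSEQ_subseq_LIMSEQ[OF L r] have "L = 0" by (simp add: o_def LIMSEQ_unique)
  with L have "(\<lambda>t. q (x t - l)) \<longlonglongrightarrow> 0" by simp
  then have "x \<longlonglongrightarrow> l"
    by (rule LIM_zero_cancel[OF tendsto_zero_if_q_tendsto_zero])
  with fixed that show ?thesis by blast
qed

end

end

section \<open>Algorithm 3 as a firmly nonexpansive map\<close>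

lemma sum_UNIV_sum3:
  "(\<Sum>a\<in>(UNIV::(('p::finite + 'p) + 'p) set). f a) =
     (\<Sum>k\<in>UNIV. f (Inl (Inl k))) + (\<Sum>k\<in>UNIV. f (Inl (Inr k))) + (\<Sum>k\<in>UNIV. f (Inr k))"
  by (simp add: UNIV_Plus_UNIV[symmetric] sum.Plus del: UNIV_Plus_UNIV)

lemma sum_mult_delta: "(\<Sum>l\<in>(UNIV::'a::finite set). a * (if k = l then c else 0) * g l) = a * c * (g k::real)"
  by (simp add: if_distrib[of "\<lambda>x. a * x * _"] cong: if_cong)

lemma sum_mult_delta': "(\<Sum>l\<in>(UNIV::'a::finite set). a * (if l = k then c else 0) * g l) = a * c * (g k::real)"
  by (simp add: if_distrib[of "\<lambda>x. a * x * _"] cong: if_cong)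

lemma bilin_on_gram:
  "bilin_on J (\<lambda>k l. \<mu> * (\<Sum>j\<in>UNIV. gram X j k * gram X j l)) w w
     = \<mu> * (\<Sum>j\<in>UNIV. (\<Sum>k\<in>J. gram X j k * w k)\<^sup>2)"
proof -
  have "bilin_on J (\<lambda>k l. \<mu> * (\<Sum>j\<in>UNIV. gram X j k * gram X j l)) w w
      = \<mu> * (\<Sum>k\<in>J. \<Sum>l\<in>J. \<Sum>j\<in>UNIV. w k * gram X j k * (gram X j l * w l))"
    unfolding bilin_on_def by (simp add: sum_distrib_left sum_distrib_right mult_ac)
  also have "(\<Sum>k\<in>J. \<Sum>l\<in>J. \<Sum>j\<in>UNIV. w k * gram X j k * (gram X j l * w l))
      = (\<Sum>k\<in>J. \<Sum>j\<in>UNIV. \<Sum>l\<in>J. w k * gram X j k * (gram X j l * w l))"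
    by (rule sum.cong[OF refl], rule sum.swap)
  also have "\<dots> = (\<Sum>j\<in>UNIV. \<Sum>k\<in>J. \<Sum>l\<in>J. w k * gram X j k * (gram X j l * w l))"
    by (rule sum.swap)
  also have "\<dots> = (\<Sum>j\<in>UNIV. (\<Sum>k\<in>J. gram X j k * w k)\<^sup>2)"
    by (simp add: power2_eq_square sum_product mult_ac)
  finally show ?thesis .
qed

text \<open>Iterates \<open>g = (\<beta>, z, u)\<close> are encoded as vectors in \<open>real^(('p + 'p) + 'p)\<close>, indexed as
  by \<open>gvec\<close>, so that the Euclidean-space results above apply to them.\<close>

definition state :: "('p \<Rightarrow> real) \<Rightarrow> ('p \<Rightarrow> real) \<Rightarrow> ('p \<Rightarrow> real) \<Rightarrow> real^(('p::finite + 'p) + 'p)" where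
  "state b z u = (\<chi> a. gvec b z u a)"

definition beta_of :: "real^(('p::finite + 'p) + 'p) \<Rightarrow> 'p \<Rightarrow> real" where
  "beta_of v k = v $ Inl (Inl k)"

definition z_of :: "real^(('p::finite + 'p) + 'p) \<Rightarrow> 'p \<Rightarrow> real" where
  "z_of v k = v $ Inl (Inr k)"

definition u_of :: "real^(('p::finite + 'p) + 'p) \<Rightarrow> 'p \<Rightarrow> real" where
  "u_of v k = v $ Inr k"

lemma vec_nth_state [simp]: "vec_nth (state b z u) = gvec b z u"
  by (rule ext) (simp add: state_def)

lemma components_state [simp]: "beta_of (state b z u) = b" "z_of (state b z u) = z" "u_of (state b z u) = u"
  by (simp_all add: beta_of_def z_of_def u_of_def gvec_def fun_eq_iff)

lemma state_components [simp]: "state (beta_of v) (z_of v) (u_of v) = v"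
  by (simp add: vec_eq_iff gvec_def beta_of_def z_of_def u_of_def split: sum.split)

lemma state_zero: "state (\<lambda>_. 0) (\<lambda>_. 0) (\<lambda>_. 0) = 0"
  by (simp add: vec_eq_iff gvec_def split: sum.split)

lemma state_diff:
  "state b z u - state b' z' u' = state (\<lambda>k. b k - b' k) (\<lambda>k. z k - z' k) (\<lambda>k. u k - u' k)"
  by (simp add: vec_eq_iff gvec_def split: sum.split)

lemma state_cases:
  obtains b z u where "v = state b z u"
  using that[of "beta_of v" "z_of v" "u_of v"] by simp

lemma tendsto_state_components:
  assumes "(\<lambda>t. state (b t) (z t) (u t)) \<longlonglongrightarrow> state b' z' u'"
  shows "(\<lambda>t. b t k) \<longlonglongrightarrow> b' k" "(\<lambda>t. z t k) \<longlonglongrightarrow> z' k" "(\<lambda>t. u t k) \<longlonglongrightarrow> u' k"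
  using tendsto_vec_nth[OF assms, of "Inl (Inl k)"] tendsto_vec_nth[OF assms, of "Inl (Inr k)"]
    tendsto_vec_nth[OF assms, of "Inr k"]
  by (simp_all add: gvec_def)

lemma state_eq_iff: "state b z u = state b' z' u' \<longleftrightarrow> b = b' \<and> z = z' \<and> u = u'"
  by (auto dest: arg_cong[of _ _ beta_of] arg_cong[of _ _ z_of] arg_cong[of _ _ u_of])

text \<open>The constrained problem behind \<open>L\<close> is the Dantzig selector: minimise \<open>\<parallel>\<beta>\<parallel>\<^sub>1\<close>
  subject to \<open>\<parallel>X\<^sup>T (X \<beta> - y)\<parallel>\<^sub>\<infinity> \<le> n \<lambda>\<close>.\<close>

locale dantzig_admm =
  fixes X :: "'n::finite \<Rightarrow> 'p::finite \<Rightarrow> real" and y :: "'n \<Rightarrow> real"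
    and lam \<mu> :: real and K :: nat and I :: "nat \<Rightarrow> 'p set"
  assumes lam_nonneg: "lam \<ge> 0" and mu_pos: "\<mu> > 0" and partition: "is_partition K I"
begin

definition "z_bound = real (card (UNIV :: 'n set)) * lam"

definition "eta_at k = (\<Sum>i\<in>{1..K}. if k \<in> I i then eta X \<mu> I i else 0)"

definition "A_mul b j = (\<Sum>k\<in>UNIV. gram X j k * b k)"
definition "A_block i b j = (\<Sum>k\<in>I i. gram X j k * b k)"
definition "At_mul u k = (\<Sum>j\<in>UNIV. gram X j k * u j)"

definition "beta_step b u k = soft_thr (1 / eta_at k) (b k + At_mul u k / eta_at k)"
definition "z_step z u j = clip (- z_bound) z_bound (z j - u j / \<mu>)"
definition "u_step b z u j = u j - \<mu> / (real K + 1) *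
   (2 * (A_mul (beta_step b u) j - z_step z u j - Xty X y j) - (A_mul b j - z j - Xty X y j))"

definition "H_inner b z u b' z' u' = (\<Sum>k\<in>UNIV. eta_at k * b k * b' k) + \<mu> * (\<Sum>j\<in>UNIV. z j * z' j)
   + (\<Sum>j\<in>UNIV. u j * (A_mul b' j - z' j) + u' j * (A_mul b j - z j))
   + (real K + 1) / \<mu> * (\<Sum>j\<in>UNIV. u j * u' j)"
definition "H_sq b z u = H_inner b z u b z u"

lemma z_bound_nonneg: "z_bound \<ge> 0"
  unfolding z_bound_def using lam_nonneg by simp

lemma K_ge_1: "K \<ge> 1"
  using partition unfolding is_partition_def by simp

lemma block_exists: "\<exists>i\<in>{1..K}. k \<in> I i"
  using partition unfolding is_partition_def by blast

lemma block_nonempty: "i \<in> {1..K} \<Longrightarrow> I i \<noteq> {}"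
  using partition unfolding is_partition_def by blast

lemma block_unique: "i \<in> {1..K} \<Longrightarrow> j \<in> {1..K} \<Longrightarrow> k \<in> I i \<Longrightarrow> k \<in> I j \<Longrightarrow> i = j"
  using partition unfolding is_partition_def by blast

lemma sum_blocks: "(\<Sum>i\<in>{1..K}. \<Sum>k\<in>I i. f k) = (\<Sum>k\<in>UNIV. f k)"
proof -
  have "(\<Sum>i\<in>{1..K}. \<Sum>k\<in>I i. f k) = sum f (\<Union>i\<in>{1..K}. I i)"
    by (rule sum.UNION_disjoint[symmetric]) (use partition in \<open>auto simp: is_partition_def\<close>)
  also have "(\<Union>i\<in>{1..K}. I i) = UNIV"
    using partition unfolding is_partition_def by blast
  finally show ?thesis .
qed

lemma eta_at_eq:
  assumes "i \<in> {1..K}" "k \<in> I i"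
  shows "eta_at k = eta X \<mu> I i"
proof -
  have "eta_at k = (\<Sum>i'\<in>{1..K}. if i' = i then eta X \<mu> I i else 0)"
    unfolding eta_at_def
  proof (rule sum.cong[OF refl])
    fix i' assume "i' \<in> {1..K}"
    then have "k \<in> I i' \<longleftrightarrow> i' = i" using block_unique[of i' i k] assms by blast
    then show "(if k \<in> I i' then eta X \<mu> I i' else 0) = (if i' = i then eta X \<mu> I i else 0)" by simp
  qed
  then show ?thesis using assms by simp
qed

lemma resid_eq: "resid X y K I b z j = A_mul b j - z j - Xty X y j"
  unfolding resid_def A_mul_def using sum_blocks[of "\<lambda>k. gram X j k * b k"] by simp

lemma A_mul_eq_sum_blocks: "A_mul b j = (\<Sum>i\<in>{1..K}. A_block i b j)"
  unfolding A_mul_def A_block_def using sum_blocks[of "\<lambda>k. gram X j k * b k"] by simp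

lemma A_mul_diff: "A_mul (\<lambda>k. f k - g k) j = A_mul f j - A_mul g j"
  unfolding A_mul_def by (simp add: right_diff_distrib sum_subtractf)

lemma A_mul_add: "A_mul (\<lambda>k. f k + g k) j = A_mul f j + A_mul g j"
  unfolding A_mul_def by (simp add: distrib_left sum.distrib)

lemma At_mul_diff: "At_mul (\<lambda>k. f k - g k) j = At_mul f j - At_mul g j"
  unfolding At_mul_def by (simp add: right_diff_distrib sum_subtractf)

lemma sum_At_mul_eq: "(\<Sum>k\<in>UNIV. At_mul u k * d k) = (\<Sum>j\<in>UNIV. u j * A_mul d j)"
  unfolding At_mul_def A_mul_def sum_distrib_left sum_distrib_right
  by (subst sum.swap) (simp add: mult_ac)

lemma A_block_sq_le:
  assumes "i \<in> {1..K}"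
  shows "\<mu> * (\<Sum>j\<in>UNIV. (A_block i v j)\<^sup>2) \<le> (eta X \<mu> I i - 1) * (\<Sum>k\<in>I i. (v k)\<^sup>2)"
  using bilin_on_le_lambda_max_on[OF _ block_nonempty[OF assms],
      of "\<lambda>k l. \<mu> * (\<Sum>j\<in>UNIV. gram X j k * gram X j l)" v]
  by (simp add: bilin_on_gram A_block_def eta_def mult.commute)

lemma eta_ge_1:
  assumes "i \<in> {1..K}"
  shows "eta X \<mu> I i \<ge> 1"
proof -
  obtain k0 where "k0 \<in> I i" using block_nonempty[OF assms] by blast
  then have "(\<Sum>k\<in>I i. (if k = k0 then 1 else 0 :: real)\<^sup>2) = 1"
    by (simp add: if_distrib[of "\<lambda>x. x\<^sup>2"] cong: if_cong)
  moreover have "\<mu> * (\<Sum>j\<in>UNIV. (A_block i (\<lambda>k. if k = k0 then 1 else 0) j)\<^sup>2) \<ge> 0"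
    using mu_pos by (simp add: sum_nonneg)
  ultimately show ?thesis
    using A_block_sq_le[OF assms, of "\<lambda>k. if k = k0 then 1 else 0"] by simp
qed

lemma eta_at_pos: "eta_at k > 0"
  using block_exists[of k] eta_at_eq eta_ge_1 by fastforce

lemma alg3_step:
  assumes "alg3 X y lam \<mu> K I \<beta> z u"
  shows "\<beta> (Suc t) = beta_step (\<beta> t) (u t)" "z (Suc t) = z_step (z t) (u t)"
    "u (Suc t) = u_step (\<beta> t) (z t) (u t)"
proof -
  note step = assms[unfolded alg3_def, rule_format, of t]
  show beta: "\<beta> (Suc t) = beta_step (\<beta> t) (u t)"
  proof
    fix k
    obtain i where i: "i \<in> {1..K}" "k \<in> I i" using block_exists by blast
    then show "\<beta> (Suc t) k = beta_step (\<beta> t) (u t) k"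
      using step eta_at_eq[OF i] unfolding beta_step_def At_mul_def by simp
  qed
  show z: "z (Suc t) = z_step (z t) (u t)"
    using step unfolding z_step_def clip_def z_bound_def by auto
  show "u (Suc t) = u_step (\<beta> t) (z t) (u t)"
    using step unfolding u_step_def resid_eq beta[symmetric] z[symmetric] by auto
qed

lemma H_sq_eq: "H_sq b z u = (\<Sum>k\<in>UNIV. eta_at k * b k * b k) + \<mu> * (\<Sum>j\<in>UNIV. z j * z j)
   + 2 * (\<Sum>j\<in>UNIV. u j * (A_mul b j - z j)) + (real K + 1) / \<mu> * (\<Sum>j\<in>UNIV. u j * u j)"
  unfolding H_sq_def H_inner_def by (simp add: sum.distrib sum_distrib_left)

lemma Hnorm_sq_gvec: "Hnorm_sq X \<mu> K I (gvec b z u) = H_sq b z u"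
proof -
  have Lam: "Lam X \<mu> K I (Inl k) (Inl l) = (if k = l then eta_at k else 0)"
    "Lam X \<mu> K I (Inr k) (Inr l) = (if k = l then \<mu> else 0)"
    "Lam X \<mu> K I (Inl k) (Inr l) = 0" "Lam X \<mu> K I (Inr k) (Inl l) = 0" for k l
    unfolding Lam_def eta_at_def by simp_all
  have coupling: "(\<Sum>k\<in>UNIV. \<Sum>j\<in>UNIV. b k * gram X j k * u j) = (\<Sum>j\<in>UNIV. u j * A_mul b j)"
    "(\<Sum>j\<in>UNIV. \<Sum>k\<in>UNIV. u j * gram X j k * b k) = (\<Sum>j\<in>UNIV. u j * A_mul b j)"
    unfolding A_mul_def sum_distrib_left by (subst sum.swap) (simp_all add: mult_ac)
  have "Hnorm_sq X \<mu> K I (gvec b z u) =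
     (\<Sum>k\<in>UNIV. \<Sum>l\<in>UNIV. b k * (if k = l then eta_at k else 0) * b l)
   + (\<Sum>k\<in>UNIV. \<Sum>j\<in>UNIV. b k * gram X j k * u j)
   + (\<Sum>k\<in>UNIV. \<Sum>l\<in>UNIV. z k * (if k = l then \<mu> else 0) * z l)
   + (\<Sum>k\<in>UNIV. \<Sum>j\<in>UNIV. z k * (if j = k then -1 else 0) * u j)
   + (\<Sum>j\<in>UNIV. \<Sum>k\<in>UNIV. u j * gram X j k * b k)
   + (\<Sum>j\<in>UNIV. \<Sum>k\<in>UNIV. u j * (if j = k then -1 else 0) * z k)
   + (\<Sum>k\<in>UNIV. \<Sum>l\<in>UNIV. u k * (if k = l then (real K + 1) / \<mu> else 0) * u l)"
    unfolding Hnorm_sq_def sum_UNIV_sum3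
    by (simp add: Hmat_def Lam Gmat_def gvec_def sum.distrib)
  also have "\<dots> = H_sq b z u"
    unfolding coupling sum_mult_delta sum_mult_delta' H_sq_eq
    by (simp add: sum_distrib_left sum_negf right_diff_distrib sum_subtractf mult_ac)
  finally show ?thesis .
qed

lemma H_sq_add:
  "H_sq (\<lambda>k. b k + b' k) (\<lambda>j. z j + z' j) (\<lambda>j. u j + u' j)
     = H_sq b z u + 2 * H_inner b z u b' z' u' + H_sq b' z' u'"
  unfolding H_sq_def H_inner_def A_mul_add
  by (simp add: sum.distrib sum_subtractf sum_distrib_left algebra_simps)

lemma u_step_residual:
  "(real K + 1) / \<mu> * ((u j - u_step b z u j) - (u' j - u_step b' z' u' j)) =
   2 * ((A_mul (beta_step b u) j - A_mul (beta_step b' u') j) - (z_step z u j - z_step z' u' j))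
     - ((A_mul b j - A_mul b' j) - (z j - z' j))"
proof -
  have "u j - u_step b z u j = \<mu> / (real K + 1) *
      (2 * (A_mul (beta_step b u) j - z_step z u j - Xty X y j) - (A_mul b j - z j - Xty X y j))"
    "u' j - u_step b' z' u' j = \<mu> / (real K + 1) *
      (2 * (A_mul (beta_step b' u') j - z_step z' u' j - Xty X y j) - (A_mul b' j - z' j - Xty X y j))"
    unfolding u_step_def by simp_all
  then show ?thesis
    using mu_pos by (simp add: field_simps add_pos_pos)
qed

text \<open>Firm nonexpansiveness of the two proximal maps, written as monotonicity of the
  inclusions \<open>\<eta> (b - b\<^sup>+) + A\<^sup>T u \<in> \<partial>\<parallel>b\<^sup>+\<parallel>\<^sub>1\<close> and \<open>\<mu> (z - z\<^sup>+) - u \<in> N(z\<^sup>+)\<close> that they solve.\<close>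

lemma beta_step_monotone:
  "(eta_at k * ((b k - beta_step b u k) - (b' k - beta_step b' u' k)) + (At_mul u k - At_mul u' k))
     * (beta_step b u k - beta_step b' u' k) \<ge> 0"
proof -
  define S where "S = soft_thr (1 / eta_at k)"
  define v where "v = b k + At_mul u k / eta_at k"
  define v' where "v' = b' k + At_mul u' k / eta_at k"
  have e: "eta_at k > 0" by (rule eta_at_pos)
  have steps: "beta_step b u k = S v" "beta_step b' u' k = S v'"
    unfolding beta_step_def S_def v_def v'_def by simp_all
  have "((v - S v) - (v' - S v')) * (S v - S v') \<ge> 0"
    unfolding S_def by (rule soft_thr_firmly_nonexpansive) (use e in simp)
  moreover have "eta_at k * ((v - S v) - (v' - S v'))
      = eta_at k * ((b k - S v) - (b' k - S v')) + (At_mul u k - At_mul u' k)"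
    using e by (simp add: v_def v'_def field_simps)
  ultimately show ?thesis
    unfolding steps using e by (metis mult.assoc mult_nonneg_nonneg less_imp_le)
qed

lemma z_step_monotone:
  "(\<mu> * ((z j - z_step z u j) - (z' j - z_step z' u' j)) - (u j - u' j))
     * (z_step z u j - z_step z' u' j) \<ge> 0"
proof -
  define C where "C = clip (- z_bound) z_bound"
  define v where "v = z j - u j / \<mu>"
  define v' where "v' = z' j - u' j / \<mu>"
  have steps: "z_step z u j = C v" "z_step z' u' j = C v'"
    unfolding z_step_def C_def v_def v'_def by simp_all
  have "((v - C v) - (v' - C v')) * (C v - C v') \<ge> 0"
    unfolding C_def by (rule clip_firmly_nonexpansive) (use z_bound_nonneg in simp)
  moreover have "\<mu> * ((v - C v) - (v' - C v')) = \<mu> * ((z j - C v) - (z' j - C v')) - (u j - u' j)"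
    using mu_pos by (simp add: v_def v'_def field_simps)
  ultimately show ?thesis
    unfolding steps using mu_pos by (metis mult.assoc mult_nonneg_nonneg less_imp_le)
qed

text \<open>The \<open>H\<close>-inner product of the step \<open>T g - T g'\<close> with the residual
  \<open>(g - T g) - (g' - T g')\<close> is the sum of the monotonicity terms above.\<close>

lemma H_inner_step_residual_nonneg:
  fixes b z u b' z' u'
  defines "db \<equiv> \<lambda>k. beta_step b u k - beta_step b' u' k" and "dz \<equiv> \<lambda>j. z_step z u j - z_step z' u' j"
    and "du \<equiv> \<lambda>j. u_step b z u j - u_step b' z' u' j"
    and "eb \<equiv> \<lambda>k. (b k - beta_step b u k) - (b' k - beta_step b' u' k)"
    and "ez \<equiv> \<lambda>j. (z j - z_step z u j) - (z' j - z_step z' u' j)"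
    and "eu \<equiv> \<lambda>j. (u j - u_step b z u j) - (u' j - u_step b' z' u' j)"
  shows "H_inner db dz du eb ez eu \<ge> 0"
proof -
  define P where "P = (\<Sum>k\<in>UNIV. (eta_at k * eb k + (At_mul u k - At_mul u' k)) * db k)
    + (\<Sum>j\<in>UNIV. (\<mu> * ez j - (u j - u' j)) * dz j)"
  have "P \<ge> 0"
    unfolding P_def db_def eb_def dz_def ez_def
    by (intro add_nonneg_nonneg sum_nonneg beta_step_monotone z_step_monotone)
  have "(\<Sum>k\<in>UNIV. (At_mul u k - At_mul u' k) * db k) = (\<Sum>j\<in>UNIV. (u j - u' j) * A_mul db j)"
    using sum_At_mul_eq[of "\<lambda>j. u j - u' j" db] by (simp add: At_mul_diff)
  then have P_eq: "P = (\<Sum>k\<in>UNIV. eta_at k * db k * eb k) + \<mu> * (\<Sum>j\<in>UNIV. dz j * ez j)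
      + (\<Sum>j\<in>UNIV. (u j - u' j) * (A_mul db j - dz j))"
    unfolding P_def
    by (simp add: sum.distrib sum_subtractf sum_distrib_left right_diff_distrib algebra_simps)
  have "A_mul b j - A_mul b' j = A_mul db j + A_mul eb j" for j
    unfolding A_mul_diff[symmetric] A_mul_add[symmetric] db_def eb_def by simp
  then have eu_eq: "(real K + 1) / \<mu> * eu j = (A_mul db j - dz j) - (A_mul eb j - ez j)" for j
    unfolding eu_def u_step_residual db_def dz_def ez_def A_mul_diff by simp
  have "H_inner db dz du eb ez eu = (\<Sum>k\<in>UNIV. eta_at k * db k * eb k) + \<mu> * (\<Sum>j\<in>UNIV. dz j * ez j)
      + (\<Sum>j\<in>UNIV. du j * (A_mul eb j - ez j) + eu j * (A_mul db j - dz j) + du j * ((real K + 1) / \<mu> * eu j))"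
    unfolding H_inner_def by (simp add: sum.distrib sum_distrib_left mult_ac)
  also have "(\<Sum>j\<in>UNIV. du j * (A_mul eb j - ez j) + eu j * (A_mul db j - dz j) + du j * ((real K + 1) / \<mu> * eu j))
      = (\<Sum>j\<in>UNIV. (u j - u' j) * (A_mul db j - dz j))"
    unfolding eu_eq by (rule sum.cong[OF refl]) (simp add: eu_def du_def algebra_simps)
  finally show ?thesis using P_eq \<open>P \<ge> 0\<close> by simp
qed

lemma H_sq_firmly_nonexpansive:
  "H_sq (\<lambda>k. beta_step b u k - beta_step b' u' k) (\<lambda>j. z_step z u j - z_step z' u' j)
        (\<lambda>j. u_step b z u j - u_step b' z' u' j)
   + H_sq (\<lambda>k. (b k - beta_step b u k) - (b' k - beta_step b' u' k))
        (\<lambda>j. (z j - z_step z u j) - (z' j - z_step z' u' j)) (\<lambda>j. (u j - u_step b z u j) - (u' j - u_step b' z' u' j))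
   \<le> H_sq (\<lambda>k. b k - b' k) (\<lambda>j. z j - z' j) (\<lambda>j. u j - u' j)"
proof -
  have "(\<lambda>k. b k - b' k) = (\<lambda>k. (beta_step b u k - beta_step b' u' k) + ((b k - beta_step b u k) - (b' k - beta_step b' u' k)))"
    "(\<lambda>j. z j - z' j) = (\<lambda>j. (z_step z u j - z_step z' u' j) + ((z j - z_step z u j) - (z' j - z_step z' u' j)))"
    "(\<lambda>j. u j - u' j) = (\<lambda>j. (u_step b z u j - u_step b' z' u' j) + ((u j - u_step b z u j) - (u' j - u_step b' z' u' j)))"
    by auto
  then show ?thesis
    using H_inner_step_residual_nonneg[of b u b' u' z z'] by (simp only: H_sq_add)
qed

text \<open>The weight \<open>(K + 1)/\<mu>\<close> of \<open>\<parallel>u\<parallel>\<^sup>2\<close> is shared out as \<open>1/\<mu>\<close> to each of the \<open>K\<close> blocks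
  and to the \<open>z\<close>-part, so that every share completes a square.\<close>

lemma H_sq_block_decomposition:
  "H_sq b z u = (\<Sum>i\<in>{1..K}. eta X \<mu> I i * (\<Sum>k\<in>I i. (b k)\<^sup>2) + 2 * (\<Sum>j\<in>UNIV. u j * A_block i b j)
      + (\<Sum>j\<in>UNIV. (u j)\<^sup>2) / \<mu>) + \<mu> * (\<Sum>j\<in>UNIV. (z j - u j / \<mu>)\<^sup>2)"
proof -
  have eta_part: "(\<Sum>k\<in>UNIV. eta_at k * b k * b k) = (\<Sum>i\<in>{1..K}. eta X \<mu> I i * (\<Sum>k\<in>I i. (b k)\<^sup>2))"
    unfolding sum_blocks[symmetric] sum_distrib_left
    by (intro sum.cong refl) (simp add: eta_at_eq power2_eq_square mult.assoc)
  have coupling_part: "(\<Sum>j\<in>UNIV. u j * A_mul b j) = (\<Sum>i\<in>{1..K}. \<Sum>j\<in>UNIV. u j * A_block i b j)"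
    unfolding A_mul_eq_sum_blocks sum_distrib_left by (rule sum.swap)
  have "\<mu> * (\<Sum>j\<in>UNIV. (z j - u j / \<mu>)\<^sup>2)
      = (\<Sum>j\<in>UNIV. \<mu> * (z j * z j) - 2 * (u j * z j) + (u j)\<^sup>2 / \<mu>)"
    unfolding sum_distrib_left
    by (rule sum.cong[OF refl]) (use mu_pos in \<open>simp add: power2_eq_square field_simps\<close>)
  then have z_part: "\<mu> * (\<Sum>j\<in>UNIV. (z j - u j / \<mu>)\<^sup>2)
      = \<mu> * (\<Sum>j\<in>UNIV. z j * z j) - 2 * (\<Sum>j\<in>UNIV. u j * z j) + (\<Sum>j\<in>UNIV. (u j)\<^sup>2) / \<mu>"
    by (simp add: sum.distrib sum_subtractf sum_distrib_left sum_divide_distrib)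
  have "(real K + 1) / \<mu> * (\<Sum>j\<in>UNIV. u j * u j) = (\<Sum>i\<in>{1..K}. (\<Sum>j\<in>UNIV. (u j)\<^sup>2) / \<mu>) + (\<Sum>j\<in>UNIV. (u j)\<^sup>2) / \<mu>"
    using mu_pos by (simp add: power2_eq_square field_simps)
  then show ?thesis
    unfolding H_sq_eq eta_part z_part sum.distrib
    by (simp add: right_diff_distrib sum_subtractf coupling_part sum_distrib_left algebra_simps)
qed

lemma block_share_lower_bound:
  assumes "i \<in> {1..K}"
  shows "eta X \<mu> I i * (\<Sum>k\<in>I i. (b k)\<^sup>2) + 2 * (\<Sum>j\<in>UNIV. u j * A_block i b j) + (\<Sum>j\<in>UNIV. (u j)\<^sup>2) / \<mu>
    \<ge> (\<Sum>k\<in>I i. (b k)\<^sup>2) + \<mu> * (\<Sum>j\<in>UNIV. (A_block i b j + u j / \<mu>)\<^sup>2)"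
proof -
  have "\<mu> * (\<Sum>j\<in>UNIV. (A_block i b j + u j / \<mu>)\<^sup>2)
      = (\<Sum>j\<in>UNIV. \<mu> * (A_block i b j)\<^sup>2 + 2 * (u j * A_block i b j) + (u j)\<^sup>2 / \<mu>)"
    unfolding sum_distrib_left
    by (rule sum.cong[OF refl]) (use mu_pos in \<open>simp add: power2_eq_square field_simps\<close>)
  then have "\<mu> * (\<Sum>j\<in>UNIV. (A_block i b j + u j / \<mu>)\<^sup>2)
      = \<mu> * (\<Sum>j\<in>UNIV. (A_block i b j)\<^sup>2) + 2 * (\<Sum>j\<in>UNIV. u j * A_block i b j) + (\<Sum>j\<in>UNIV. (u j)\<^sup>2) / \<mu>"
    by (simp add: sum.distrib sum_distrib_left sum_divide_distrib)
  then show ?thesis using A_block_sq_le[OF assms, of b] by (simp add: algebra_simps)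
qed

lemma H_sq_lower_bound:
  "H_sq b z u \<ge> (\<Sum>k\<in>UNIV. (b k)\<^sup>2) + \<mu> * (\<Sum>j\<in>UNIV. (A_block 1 b j + u j / \<mu>)\<^sup>2)
      + \<mu> * (\<Sum>j\<in>UNIV. (z j - u j / \<mu>)\<^sup>2)"
proof -
  define W where "W i = \<mu> * (\<Sum>j\<in>UNIV. (A_block i b j + u j / \<mu>)\<^sup>2)" for i
  have "W i \<ge> 0" for i unfolding W_def using mu_pos by (simp add: sum_nonneg)
  then have "W 1 \<le> (\<Sum>i\<in>{1..K}. W i)"
    by (intro member_le_sum) (use K_ge_1 in auto)
  moreover have "(\<Sum>i\<in>{1..K}. (\<Sum>k\<in>I i. (b k)\<^sup>2) + W i)
      \<le> (\<Sum>i\<in>{1..K}. eta X \<mu> I i * (\<Sum>k\<in>I i. (b k)\<^sup>2) + 2 * (\<Sum>j\<in>UNIV. u j * A_block i b j)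
      + (\<Sum>j\<in>UNIV. (u j)\<^sup>2) / \<mu>)"
    unfolding W_def by (rule sum_mono) (rule block_share_lower_bound)
  ultimately show ?thesis
    unfolding H_sq_block_decomposition[of b z u] sum.distrib sum_blocks W_def by linarith
qed

lemma H_sq_nonpos_imp_zero:
  assumes "H_sq b z u \<le> 0"
  shows "b = (\<lambda>_. 0) \<and> z = (\<lambda>_. 0) \<and> u = (\<lambda>_. 0)"
proof -
  have sq_zero: "(\<Sum>j\<in>UNIV. (f j)\<^sup>2) = 0 \<Longrightarrow> f = (\<lambda>_. 0)" for f :: "'p \<Rightarrow> real"
    by (auto simp: sum_nonneg_eq_0_iff)
  have nonneg: "(\<Sum>k\<in>UNIV. (b k)\<^sup>2) \<ge> 0" "\<mu> * (\<Sum>j\<in>UNIV. (A_block 1 b j + u j / \<mu>)\<^sup>2) \<ge> 0"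
      "\<mu> * (\<Sum>j\<in>UNIV. (z j - u j / \<mu>)\<^sup>2) \<ge> 0"
    using mu_pos by (simp_all add: sum_nonneg)
  moreover note H_sq_lower_bound[where b=b and z=z and u=u]
  ultimately have "(\<Sum>k\<in>UNIV. (b k)\<^sup>2) = 0" and "\<mu> * (\<Sum>j\<in>UNIV. (A_block 1 b j + u j / \<mu>)\<^sup>2) = 0"
      and "\<mu> * (\<Sum>j\<in>UNIV. (z j - u j / \<mu>)\<^sup>2) = 0"
    using assms by linarith+
  then have "(\<Sum>k\<in>UNIV. (b k)\<^sup>2) = 0" and "(\<Sum>j\<in>UNIV. (A_block 1 b j + u j / \<mu>)\<^sup>2) = 0"
      and "(\<Sum>j\<in>UNIV. (z j - u j / \<mu>)\<^sup>2) = 0"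
    using mu_pos by simp_all
  then have b: "b = (\<lambda>_. 0)" and "(\<lambda>j. A_block 1 b j + u j / \<mu>) = (\<lambda>_. 0)"
      and "(\<lambda>j. z j - u j / \<mu>) = (\<lambda>_. 0)"
    using sq_zero[of b] sq_zero[of "\<lambda>j. A_block 1 b j + u j / \<mu>"] sq_zero[of "\<lambda>j. z j - u j / \<mu>"]
    by simp_all
  then have "u = (\<lambda>_. 0)" using mu_pos by (auto simp: A_block_def fun_eq_iff)
  with b \<open>(\<lambda>j. z j - u j / \<mu>) = (\<lambda>_. 0)\<close> show ?thesis by (auto simp: fun_eq_iff)
qed

definition "kkt b z u \<longleftrightarrow> (\<forall>j. A_mul b j - z j - Xty X y j = 0) \<and> (\<forall>j. \<bar>z j\<bar> \<le> z_bound) \<and>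
   (\<forall>k c. \<bar>b k\<bar> + At_mul u k * (c - b k) \<le> \<bar>c\<bar>) \<and> (\<forall>j c. \<bar>c\<bar> \<le> z_bound \<longrightarrow> u j * (c - z j) \<ge> 0)"

definition "is_fixed b z u \<longleftrightarrow> beta_step b u = b \<and> z_step z u = z \<and> u_step b z u = u"

lemma lagr_eq: "lagr X y lam K I b z u =
    ereal ((\<Sum>k\<in>UNIV. \<bar>b k\<bar>) - (\<Sum>j\<in>UNIV. u j * (A_mul b j - z j - Xty X y j)))
    + (if \<forall>j. \<bar>z j\<bar> \<le> z_bound then 0 else \<infinity>)"
  unfolding lagr_def resid_eq sum_blocks z_bound_def by simp

lemma coupling_at_feasible:
  assumes "\<forall>j. A_mul b j - z j - Xty X y j = 0"
  shows "(\<Sum>j\<in>UNIV. u j * (A_mul b' j - z' j - Xty X y j))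
    = (\<Sum>k\<in>UNIV. At_mul u k * (b' k - b k)) - (\<Sum>j\<in>UNIV. u j * (z' j - z j))"
proof -
  have xty: "Xty X y j = A_mul b j - z j" for j using assms by (simp add: algebra_simps)
  have "(\<Sum>j\<in>UNIV. u j * (A_mul b' j - z' j - Xty X y j))
      = (\<Sum>j\<in>UNIV. u j * A_mul (\<lambda>k. b' k - b k) j - u j * (z' j - z j))"
    unfolding xty A_mul_diff by (rule sum.cong[OF refl]) (simp add: algebra_simps)
  then show ?thesis by (simp only: sum_subtractf sum_At_mul_eq)
qed

lemma beta_step_fixed_iff: "beta_step b u = b \<longleftrightarrow> (\<forall>k c. \<bar>b k\<bar> + At_mul u k * (c - b k) \<le> \<bar>c\<bar>)"
proof -
  have "beta_step b u k = soft_thr (1 / eta_at k) (b k + 1 / eta_at k * At_mul u k)" for k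
    unfolding beta_step_def by simp
  then show ?thesis
    using soft_thr_fixed_iff[of "1 / eta_at k" for k] eta_at_pos by (simp add: fun_eq_iff)
qed

lemma z_step_fixed_iff:
  "z_step z u = z \<longleftrightarrow> (\<forall>j. \<bar>z j\<bar> \<le> z_bound) \<and> (\<forall>j c. \<bar>c\<bar> \<le> z_bound \<longrightarrow> u j * (c - z j) \<ge> 0)"
proof -
  have "- z_bound \<le> z_bound" using z_bound_nonneg by simp
  then have "z_step z u = z \<longleftrightarrow>
      (\<forall>j. - z_bound \<le> z j \<and> z j \<le> z_bound \<and> (\<forall>c. - z_bound \<le> c \<and> c \<le> z_bound \<longrightarrow> u j * (c - z j) \<ge> 0))"
    unfolding z_step_def fun_eq_iff using clip_fixed_iff[OF mu_pos] by simp
  moreover have "\<bar>x\<bar> \<le> z_bound \<longleftrightarrow> - z_bound \<le> x \<and> x \<le> z_bound" for x by arith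
  ultimately show ?thesis by blast
qed

lemma fixed_iff_kkt: "is_fixed b z u \<longleftrightarrow> kkt b z u"
proof -
  have "u_step b z u = u \<longleftrightarrow> (\<forall>j. A_mul b j - z j - Xty X y j = 0)"
    if "beta_step b u = b" "z_step z u = z"
  proof -
    have "u_step b z u j = u j - \<mu> / (real K + 1) * (A_mul b j - z j - Xty X y j)" for j
      unfolding u_step_def that by simp
    moreover have "\<mu> / (real K + 1) \<noteq> 0" using mu_pos by simp
    ultimately show ?thesis by (simp add: fun_eq_iff)
  qed
  then show ?thesis
    unfolding is_fixed_def kkt_def beta_step_fixed_iff z_step_fixed_iff by blast
qed

lemma kkt_imp_saddle:
  assumes "kkt b z u"
  shows "saddle X y lam K I b z u"
proof -
  have feasible: "\<forall>j. A_mul b j - z j - Xty X y j = 0" and box: "\<forall>j. \<bar>z j\<bar> \<le> z_bound"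
    and subgrad: "\<forall>k c. \<bar>b k\<bar> + At_mul u k * (c - b k) \<le> \<bar>c\<bar>"
    and normal: "\<forall>j c. \<bar>c\<bar> \<le> z_bound \<longrightarrow> u j * (c - z j) \<ge> 0"
    using assms unfolding kkt_def by blast+
  have lagr_at_b: "lagr X y lam K I b z u' = ereal (\<Sum>k\<in>UNIV. \<bar>b k\<bar>)" for u'
    unfolding lagr_eq using feasible box by simp
  have "ereal (\<Sum>k\<in>UNIV. \<bar>b k\<bar>) \<le> lagr X y lam K I b' z' u" for b' z'
  proof (cases "\<forall>j. \<bar>z' j\<bar> \<le> z_bound")
    case True
    have "(\<Sum>k\<in>UNIV. At_mul u k * (b' k - b k)) \<le> (\<Sum>k\<in>UNIV. \<bar>b' k\<bar> - \<bar>b k\<bar>)"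
      using subgrad by (intro sum_mono) (smt (verit))
    moreover have "(\<Sum>j\<in>UNIV. u j * (z' j - z j)) \<ge> 0"
      using normal True by (intro sum_nonneg) blast
    ultimately show ?thesis
      unfolding lagr_eq using True coupling_at_feasible[OF feasible] by (simp add: sum_subtractf)
  qed (auto simp: lagr_eq)
  then show ?thesis unfolding saddle_def lagr_at_b by simp
qed

lemma saddle_imp_feasible:
  assumes "saddle X y lam K I b z u"
  shows "\<forall>j. \<bar>z j\<bar> \<le> z_bound" and "\<forall>j. A_mul b j - z j - Xty X y j = 0"
proof -
  have max_u: "\<And>u'. lagr X y lam K I b z u' \<le> lagr X y lam K I b z u"
    and min_bz: "\<And>b' z'. lagr X y lam K I b z u \<le> lagr X y lam K I b' z' u"
    using assms unfolding saddle_def by blast+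
  show box: "\<forall>j. \<bar>z j\<bar> \<le> z_bound"
  proof (rule ccontr)
    assume "\<not> (\<forall>j. \<bar>z j\<bar> \<le> z_bound)"
    then have "lagr X y lam K I b z u = \<infinity>" unfolding lagr_eq by simp
    with min_bz[of b "\<lambda>_. 0"] show False using z_bound_nonneg by (simp add: lagr_eq)
  qed
  define r where "r j = A_mul b j - z j - Xty X y j" for j
  have "(\<Sum>k\<in>UNIV. \<bar>b k\<bar>) - (\<Sum>j\<in>UNIV. (u j - r j) * r j) \<le> (\<Sum>k\<in>UNIV. \<bar>b k\<bar>) - (\<Sum>j\<in>UNIV. u j * r j)"
    using max_u[of "\<lambda>j. u j - r j"] box unfolding lagr_eq r_def by simp
  then have "(\<Sum>j\<in>UNIV. (r j)\<^sup>2) \<le> 0"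
    by (simp add: algebra_simps sum_subtractf power2_eq_square)
  then have "\<forall>j. r j = 0"
    using sum_nonneg_eq_0_iff[of UNIV "\<lambda>j. (r j)\<^sup>2"] by (simp add: antisym sum_nonneg)
  then show "\<forall>j. A_mul b j - z j - Xty X y j = 0" unfolding r_def .
qed

text \<open>The minimisation half of the saddle inequality, tested on perturbations of a single
  coordinate of \<open>b\<close> or of \<open>z\<close>, yields the subgradient and normal-cone conditions.\<close>

lemma saddle_imp_kkt:
  assumes "saddle X y lam K I b z u"
  shows "kkt b z u"
proof -
  note box = saddle_imp_feasible(1)[OF assms] and feasible = saddle_imp_feasible(2)[OF assms]
  have min_bz: "(\<Sum>k\<in>UNIV. At_mul u k * (b' k - b k)) - (\<Sum>j\<in>UNIV. u j * (z' j - z j))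
      \<le> (\<Sum>k\<in>UNIV. \<bar>b' k\<bar> - \<bar>b k\<bar>)" if "\<forall>j. \<bar>z' j\<bar> \<le> z_bound" for b' z'
  proof -
    have "lagr X y lam K I b z u \<le> lagr X y lam K I b' z' u"
      using assms unfolding saddle_def by blast
    then show ?thesis
      using that box feasible coupling_at_feasible[OF feasible, of u b' z']
      by (simp add: lagr_eq sum_subtractf)
  qed
  have "\<bar>b k\<bar> + At_mul u k * (c - b k) \<le> \<bar>c\<bar>" for k c
  proof -
    have "(\<Sum>l\<in>UNIV. At_mul u l * ((b(k := c)) l - b l)) = (\<Sum>l\<in>UNIV. if l = k then At_mul u k * (c - b k) else 0)"
      "(\<Sum>l\<in>UNIV. \<bar>(b(k := c)) l\<bar> - \<bar>b l\<bar>) = (\<Sum>l\<in>UNIV. if l = k then \<bar>c\<bar> - \<bar>b k\<bar> else 0)"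
      by (rule sum.cong; simp)+
    then show ?thesis using min_bz[OF box, of "b(k := c)"] by simp
  qed
  moreover have "u j * (c - z j) \<ge> 0" if "\<bar>c\<bar> \<le> z_bound" for j c
  proof -
    have "(\<Sum>i\<in>UNIV. u i * ((z(j := c)) i - z i)) = (\<Sum>i\<in>UNIV. if i = j then u j * (c - z j) else 0)"
      by (rule sum.cong) simp_all
    then show ?thesis using min_bz[of "z(j := c)" b] box that by simp
  qed
  ultimately show ?thesis unfolding kkt_def using feasible box by blast
qed

lemma saddle_iff_fixed: "saddle X y lam K I b z u \<longleftrightarrow> is_fixed b z u"
  using saddle_imp_kkt kkt_imp_saddle fixed_iff_kkt by blast

definition "alg_map v = state (beta_step (beta_of v) (u_of v)) (z_step (z_of v) (u_of v))
  (u_step (beta_of v) (z_of v) (u_of v))"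

lemma alg_map_state: "alg_map (state b z u) = state (beta_step b u) (z_step z u) (u_step b z u)"
  by (simp add: alg_map_def)

definition "H_norm v = Hnorm_sq X \<mu> K I (vec_nth v)"

lemma H_norm_state_diff:
  "H_norm (state b z u - state b' z' u') = Hnorm_sq X \<mu> K I (\<lambda>a. gvec b z u a - gvec b' z' u' a)"
  unfolding H_norm_def by (rule arg_cong[where f = "Hnorm_sq X \<mu> K I"]) (simp add: fun_eq_iff)

lemma H_norm_state: "H_norm (state b z u) = H_sq b z u"
  by (simp add: H_norm_def Hnorm_sq_gvec)

sublocale firmly_nonexpansive H_norm alg_map
proof
  show "continuous_on UNIV H_norm"
    unfolding H_norm_def Hnorm_sq_def by (intro continuous_intros)
  show "H_norm (a *\<^sub>R v) = a\<^sup>2 * H_norm v" for a v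
    unfolding H_norm_def Hnorm_sq_def by (simp add: sum_distrib_left power2_eq_square mult_ac)
  show "H_norm v > 0" if "v \<noteq> 0" for v
  proof (rule ccontr)
    assume "\<not> H_norm v > 0"
    then have "H_sq (beta_of v) (z_of v) (u_of v) \<le> 0"
      using H_norm_state[of "beta_of v" "z_of v" "u_of v"] by simp
    then have "v = state (\<lambda>_. 0) (\<lambda>_. 0) (\<lambda>_. 0)"
      using H_sq_nonpos_imp_zero state_components[of v] by metis
    then show False using that by (simp add: state_zero)
  qed
  have "H_norm (alg_map (state b z u) - alg_map (state b' z' u'))
      + H_norm (state b z u - alg_map (state b z u) - (state b' z' u' - alg_map (state b' z' u')))
      \<le> H_norm (state b z u - state b' z' u')" for b z u b' z' u'
    using H_sq_firmly_nonexpansive[of b u b' u' z z'] by (simp add: alg_map_state state_diff H_norm_state)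
  then show "H_norm (alg_map v - alg_map w) + H_norm (v - alg_map v - (w - alg_map w)) \<le> H_norm (v - w)" for v w
    using state_components by metis
qed

end

theorem theorem3:
  fixes X :: "'n::finite \<Rightarrow> 'p::finite \<Rightarrow> real" and y :: "'n \<Rightarrow> real"
    and lam \<mu> :: real and K :: nat and I :: "nat \<Rightarrow> 'p set"
    and \<beta> z u :: "nat \<Rightarrow> 'p \<Rightarrow> real"
  assumes "lam \<ge> 0" and "\<mu> > 0" and "is_partition K I"
    and "alg3 X y lam \<mu> K I \<beta> z u"
    and "\<exists>\<beta>s zs us. saddle X y lam K I \<beta>s zs us"
  shows "\<exists>\<beta>s zs us. saddle X y lam K I \<beta>s zs us \<and>
           (\<forall>k. (\<lambda>t. \<beta> t k) \<longlonglongrightarrow> \<beta>s k) \<and>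
           (\<forall>k. (\<lambda>t. z t k) \<longlonglongrightarrow> zs k) \<and>
           (\<forall>k. (\<lambda>t. u t k) \<longlonglongrightarrow> us k) \<and>
           (\<forall>T::nat. T > 0 \<longrightarrow>
              Hnorm_sq X \<mu> K I (\<lambda>a. gvec (\<beta> T) (z T) (u T) a - gvec (\<beta> (Suc T)) (z (Suc T)) (u (Suc T)) a)
              \<le> 1 / (real T + 1) *
                Hnorm_sq X \<mu> K I (\<lambda>a. gvec (\<beta> 0) (z 0) (u 0) a - gvec \<beta>s zs us a))"
proof -
  interpret dantzig_admm X y lam \<mu> K I using assms(1-3) by unfold_locales
  define g where "g t = state (\<beta> t) (z t) (u t)" for t
  have iter: "g (Suc t) = alg_map (g t)" for t
    using alg3_step[OF assms(4)] by (simp add: g_def alg_map_state)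
  obtain bs zs us where "saddle X y lam K I bs zs us" using assms(5) by blast
  then have "alg_map (state bs zs us) = state bs zs us"
    by (simp add: alg_map_state saddle_iff_fixed is_fixed_def)
  then obtain l where fixed: "alg_map l = l" and lim: "g \<longlonglongrightarrow> l"
    by (rule iterates_converge[of g, OF iter])
  obtain bl zl ul where l: "l = state bl zl ul" by (rule state_cases)
  have "saddle X y lam K I bl zl ul"
    using fixed by (simp add: l alg_map_state state_eq_iff saddle_iff_fixed is_fixed_def)
  moreover have "(\<lambda>t. \<beta> t k) \<longlonglongrightarrow> bl k" "(\<lambda>t. z t k) \<longlonglongrightarrow> zl k" "(\<lambda>t. u t k) \<longlonglongrightarrow> ul k" for k
    using tendsto_state_components[OF lim[unfolded g_def l]] by simp_all
  moreover have "Hnorm_sq X \<mu> K I (\<lambda>a. gvec (\<beta> T) (z T) (u T) a - gvec (\<beta> (Suc T)) (z (Suc T)) (u (Suc T)) a)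
      \<le> 1 / (real T + 1) * Hnorm_sq X \<mu> K I (\<lambda>a. gvec (\<beta> 0) (z 0) (u 0) a - gvec bl zl ul a)" for T
    using iterates_diff_rate[of g, OF iter fixed] by (simp add: g_def l H_norm_state_diff)
  ultimately show ?thesis by blast
qed

end
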